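(* Let $C_8$ be the configuration with lines $l_0,\dots,l_7$ and points $p_{012},p_{034},p_{056},p_{07},p_{135},p_{147},p_{16},p_{23},p_{246},p_{257},p_{367},p_{45}$, where $p_{ijk}$ is incident exactly to $l_i,l_j,l_k$ and $p_{ij}$ exactly to $l_i,l_j$. Let $\mathcal{P}_0$ be the set of its points not incident to $l_0$, $\mathcal{A}=\{(i,p)\in\{1,\dots,7\}\times\mathcal{P}_0:p\prec l_i\}$. Let $L=\bigoplus_k L_k$ be the free Lie algebra over $\mathbb{Z}$ on $x_1,\dots,x_7$, $H=L_1$, $S_p=\sum_{j:\,p\prec l_j}x_j$, $R_2\subset L_2$ the subgroup with $\mathbb{Z}$-basis $\bar r(i,p)=[x_i,S_p]$ for $(i,p)\in\mathcal{A}$, $i\ne\min\{j:l_j\succ p\}$, $R_3=[H,R_2]$, $P_3=L_3/R_3$, $A=H^{\mathcal{A}}$, and $\tilde\tau:A\to\mathrm{Hom}(R_2,P_3)$ defined by $\tilde\tau a(\bar r(i,p))=[[x_i,a(i,p)],S_p]+[x_i,\sum_{j:\,p\prec l_j}[x_j,a(j,p)]]+R_3$. Let $U\subseteq A$ be the subgroup generated by $a^{(0)}_{i,p}$ ($(i,p)\in\mathcal{A}$), $a^{(0)}_{i,p}(j,q)=\delta_{i,j}\delta_{p,q}x_i$; $a^{(1)}_{i,p}$ ($1\le i\le7$, $p\in\mathcal{P}_0$), $a^{(1)}_{i,p}(j,q)=\delta_{p,q}x_i$; and $a^{(2)}_{i,p_1,p_2}$ ($1\le i\le 7$, $p_1,p_2\in\mathcal{P}_0$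 incident to $l_i$), $a^{(2)}_{i,p_1,p_2}(j,q)=\delta_{i,j}\delta_{p_1,q}S_{p_2}$. Then $U=\ker\tilde\tau$.
   Context: Incidence of a point $p$ and line $l$ is written $p\prec l$ or $l\succ p$. The elements $\bar r(i,p)$ listed are linearly independent in $L_2$, so $\tilde\tau$ is well defined by its values on them. *)

theory Defs
  imports Main "HOL-Library.Function_Algebras"
begin

text \<open>Free associative ring Z<x_1..x_7>: elements are functions from words
 (lists of letter indices) to their integer coefficient. Addition etc. are pointwise
 (Function_Algebras); the (noncommutative) product is concatenation convolution.
 The free Lie ring L over Z on x_1..x_7 is realised (Magnus/Witt) as the Lie subring
 generated by the x_i, graded by bracket length.\<close>

type_synonym ncpoly = "nat list \<Rightarrow> int"

definition ncmult :: "ncpoly \<Rightarrow> ncpoly \<Rightarrow> ncpoly" where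
  "ncmult p q = (\<lambda>w. \<Sum>k\<in>{0..length w}. p (take k w) * q (drop k w))"

definition lbr :: "ncpoly \<Rightarrow> ncpoly \<Rightarrow> ncpoly" where
  "lbr p q = ncmult p q - ncmult q p"

definition gen :: "nat \<Rightarrow> ncpoly" where
  "gen i = (\<lambda>w. if w = [i] then 1 else 0)"

inductive LieDeg :: "nat \<Rightarrow> ncpoly \<Rightarrow> bool" where
  zero: "LieDeg k 0"
| gen: "i \<in> {1..7} \<Longrightarrow> LieDeg 1 (gen i)"
| diff: "LieDeg k a \<Longrightarrow> LieDeg k b \<Longrightarrow> LieDeg k (a - b)"
| br: "LieDeg m a \<Longrightarrow> LieDeg n b \<Longrightarrow> LieDeg (m + n) (lbr a b)"

inductive_set zspan :: "'a::ab_group_add set \<Rightarrow> 'a set" for S where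
  zero: "0 \<in> zspan S"
| base: "s \<in> S \<Longrightarrow> s \<in> zspan S"
| diff: "a \<in> zspan S \<Longrightarrow> b \<in> zspan S \<Longrightarrow> a - b \<in> zspan S"

text \<open>Configuration C_8: a point is identified with the set of indices of the lines
 it is incident to; p \<prec> l_i iff i \<in> p.\<close>
definition C8_points :: "nat set set" where
  "C8_points = {{0,1,2},{0,3,4},{0,5,6},{0,7},{1,3,5},{1,4,7},{1,6},{2,3},
                {2,4,6},{2,5,7},{3,6,7},{4,5}}"

definition P0 :: "nat set set" where
  "P0 = {p \<in> C8_points. 0 \<notin> p}"

definition Aidx :: "(nat \<times> nat set) set" where
  "Aidx = {(i, p). i \<in> {1..7} \<and> p \<in> P0 \<and> i \<in> p}"

definition S :: "nat set \<Rightarrow> ncpoly" where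
  "S p = (\<Sum>j\<in>p. gen j)"

definition Bidx :: "(nat \<times> nat set) set" where
  "Bidx = {(i, p) \<in> Aidx. i \<noteq> Min p}"

definition rbar :: "nat \<Rightarrow> nat set \<Rightarrow> ncpoly" where
  "rbar i p = lbr (gen i) (S p)"

definition R2 :: "ncpoly set" where
  "R2 = zspan {rbar i p | i p. (i, p) \<in> Bidx}"

definition R3 :: "ncpoly set" where
  "R3 = zspan {lbr h r | h r. LieDeg 1 h \<and> r \<in> R2}"

definition Agrp :: "(nat \<times> nat set \<Rightarrow> ncpoly) set" where
  "Agrp = {a. (\<forall>ip\<in>Aidx. LieDeg 1 (a ip)) \<and> (\<forall>ip. ip \<notin> Aidx \<longrightarrow> a ip = 0)}"

text \<open>Representative in L_3 of tau~ a (rbar(i,p)).\<close>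
definition tau_val :: "(nat \<times> nat set \<Rightarrow> ncpoly) \<Rightarrow> nat \<Rightarrow> nat set \<Rightarrow> ncpoly" where
  "tau_val a i p = lbr (lbr (gen i) (a (i, p))) (S p)
                   + lbr (gen i) (\<Sum>j\<in>p. lbr (gen j) (a (j, p)))"

text \<open>Kernel of tau~ : A \<rightarrow> Hom(R_2, P_3). Since tau~ a is defined by its values on the
 Z-basis rbar(i,p) of R_2, tau~ a = 0 iff every value vanishes in P_3 = L_3/R_3.\<close>
definition ker_tau :: "(nat \<times> nat set \<Rightarrow> ncpoly) set" where
  "ker_tau = {a \<in> Agrp. \<forall>(i, p)\<in>Bidx. tau_val a i p \<in> R3}"

definition a0 :: "nat \<Rightarrow> nat set \<Rightarrow> nat \<times> nat set \<Rightarrow> ncpoly" where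
  "a0 i p = (\<lambda>(j, q). if (j, q) \<in> Aidx \<and> j = i \<and> q = p then gen i else 0)"

definition a1 :: "nat \<Rightarrow> nat set \<Rightarrow> nat \<times> nat set \<Rightarrow> ncpoly" where
  "a1 i p = (\<lambda>(j, q). if (j, q) \<in> Aidx \<and> q = p then gen i else 0)"

definition a2 :: "nat \<Rightarrow> nat set \<Rightarrow> nat set \<Rightarrow> nat \<times> nat set \<Rightarrow> ncpoly" where
  "a2 i p1 p2 = (\<lambda>(j, q). if (j, q) \<in> Aidx \<and> j = i \<and> q = p1 then S p2 else 0)"

definition U :: "(nat \<times> nat set \<Rightarrow> ncpoly) set" where
  "U = zspan ({a0 i p | i p. (i, p) \<in> Aidx}
            \<union> {a1 i p | i p. i \<in> {1..7} \<and> p \<in> P0}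
            \<union> {a2 i p1 p2 | i p1 p2. i \<in> {1..7} \<and> p1 \<in> P0 \<and> p2 \<in> P0 \<and> i \<in> p1 \<and> i \<in> p2})"

end

theory Submission
  imports Defs
begin

(* The map tau~ is block diagonal: tau~ a (rbar(i,p)) only involves the entries a(j,p) at the
   point p, and U is the sum of its blocks as well.

   U lies in the kernel: a0 and a2 put a single degree-one element h into one slot (i,p) with
   [x_i, h] in R_2 (it is 0 or rbar(i,q)), and a1 is constant on a block, where the Jacobi identity
   turns the value of tau~ into -[x_m, rbar(k,p)], which lies in R_3.

   Conversely, modulo the slotwise generators x_j and S_q (q through j) an element of slot j is
   determined by three of its coordinates, and modulo a1 one may subtract a common element d from
   all slots of a block. For each block a few integer functionals on L_3 that vanish on R_3 turn
   the kernel condition into linear equations on the coordinates, and these equations are exactly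
   what is needed to choose d so that every slot becomes slotwise trivial. *)

section \<open>The free associative ring in low degrees\<close>

lemma sum_fun_apply: "(\<Sum>a\<in>A. f a) x = (\<Sum>a\<in>A. f a x)"
  by (induction A rule: infinite_finite_induct) auto

lemma of_int_fun_apply: "(of_int c :: 'a \<Rightarrow> 'b::ring_1) x = of_int c"
  by (cases c rule: int_cases) (simp_all add: of_nat_fun)

lemma ncmult_apply_Nil: "ncmult p q [] = p [] * q []"
  by (simp add: ncmult_def)

lemma ncmult_apply_1: "ncmult p q [a] = p [] * q [a] + p [a] * q []"
  by (simp add: ncmult_def)

lemma ncmult_apply_2: "ncmult p q [a, b] = p [] * q [a, b] + p [a] * q [b] + p [a, b] * q []"
  by (simp add: ncmult_def numeral_eq_Suc atLeast0_atMost_Suc)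

lemma ncmult_apply_3:
  "ncmult p q [a, b, c] =
    p [] * q [a, b, c] + p [a] * q [b, c] + p [a, b] * q [c] + p [a, b, c] * q []"
  by (simp add: ncmult_def numeral_eq_Suc atLeast0_atMost_Suc)

lemmas ncmult_apply_short = ncmult_apply_Nil ncmult_apply_1 ncmult_apply_2 ncmult_apply_3

lemma ncmult_diff_left: "ncmult (p - q) r = ncmult p r - ncmult q r"
  by (rule ext) (simp add: ncmult_def algebra_simps sum_subtractf)

lemma ncmult_diff_right: "ncmult r (p - q) = ncmult r p - ncmult r q"
  by (rule ext) (simp add: ncmult_def algebra_simps sum_subtractf)

lemma ncmult_sum_left: "ncmult (\<Sum>a\<in>A. f a) r = (\<Sum>a\<in>A. ncmult (f a) r)"
  by (rule ext) (simp add: ncmult_def sum_fun_apply sum_distrib_right flip: sum.swap[of _ A])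

lemma ncmult_sum_right: "ncmult r (\<Sum>a\<in>A. f a) = (\<Sum>a\<in>A. ncmult r (f a))"
  by (rule ext) (simp add: ncmult_def sum_fun_apply sum_distrib_left flip: sum.swap[of _ A])

lemma lbr_diff_left: "lbr (p - q) r = lbr p r - lbr q r"
  by (simp add: lbr_def ncmult_diff_left ncmult_diff_right)

lemma lbr_diff_right: "lbr r (p - q) = lbr r p - lbr r q"
  by (simp add: lbr_def ncmult_diff_left ncmult_diff_right)

lemma lbr_zero_left [simp]: "lbr 0 r = 0"
  using lbr_diff_left[of 0 0 r] by simp

lemma lbr_zero_right [simp]: "lbr r 0 = 0"
  using lbr_diff_right[of r 0 0] by simp

lemma lbr_self [simp]: "lbr r r = 0"
  by (simp add: lbr_def)

lemma lbr_antisym: "lbr p q = - lbr q p"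
  by (simp add: lbr_def)

lemma lbr_uminus_right: "lbr r (- p) = - lbr r p"
  using lbr_diff_right[of r 0 p] by simp

lemma lbr_sum_left: "lbr (\<Sum>a\<in>A. f a) r = (\<Sum>a\<in>A. lbr (f a) r)"
  by (simp add: lbr_def ncmult_sum_left ncmult_sum_right sum_subtractf)

lemma gen_apply [simp]:
  "gen i [] = 0" "gen i [a] = (if a = i then 1 else 0)" "gen i (a # b # w) = 0"
  by (auto simp: gen_def)

lemma S_apply [simp]:
  "S q [] = 0" "finite q \<Longrightarrow> S q [a] = (if a \<in> q then 1 else 0)" "S q (a # b # w) = 0"
  by (simp_all add: S_def sum_fun_apply)

lemma zspan_uminus: "x \<in> zspan A \<Longrightarrow> - x \<in> zspan A"
  using zspan.diff[OF zspan.zero] by fastforce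

lemma zspan_add: "x \<in> zspan A \<Longrightarrow> y \<in> zspan A \<Longrightarrow> x + y \<in> zspan A"
  using zspan.diff[OF _ zspan_uminus] by fastforce

lemma zspan_sum: "(\<And>i. i \<in> I \<Longrightarrow> f i \<in> zspan A) \<Longrightarrow> (\<Sum>i\<in>I. f i) \<in> zspan A"
  by (induction I rule: infinite_finite_induct) (auto intro: zspan_add zspan.zero)

lemma zspan_sum_list:
  "(\<And>x. x \<in> set xs \<Longrightarrow> f x \<in> zspan A) \<Longrightarrow> (\<Sum>x\<leftarrow>xs. f x) \<in> zspan A"
  by (induction xs) (auto intro: zspan_add zspan.zero)

lemma zspan_of_int_mult:
  fixes x :: "'a::{ab_group_add, ring_1}"
  assumes "x \<in> zspan A"
  shows "of_int c * x \<in> zspan A"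
proof (induction c rule: int_induct[where k = 0])
  case base
  show ?case by (simp add: zspan.zero)
next
  case (step1 c)
  then show ?case using zspan_add[OF _ assms] by (simp add: distrib_right)
next
  case (step2 c)
  then show ?case using zspan.diff[OF _ assms] by (simp add: left_diff_distrib)
qed

lemma zspan_map:
  assumes f: "\<And>x y. f (x - y) = f x - f y"
    and gens: "\<And>a. a \<in> A \<Longrightarrow> f a \<in> zspan B"
    and x: "x \<in> zspan A"
  shows "f x \<in> zspan B"
  using x
proof (induction rule: zspan.induct)
  case zero
  have "f 0 = 0" using f[of 0 0] by simp
  then show ?case by (metis zspan.zero)
qed (auto simp: f gens intro: zspan.diff)

lemma zspan_map_vanish:
  fixes f :: "'a::ab_group_add \<Rightarrow> 'b::ab_group_add"
  assumes f: "\<And>x y. f (x - y) = f x - f y" and gens: "\<And>a. a \<in> A \<Longrightarrow> f a = 0"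
    and x: "x \<in> zspan A"
  shows "f x = 0"
  using x
proof (induction rule: zspan.induct)
  case zero
  show ?case using f[of 0 0] by simp
qed (simp_all add: f gens)

lemma LieDeg_support:
  "LieDeg k a \<Longrightarrow> a w \<noteq> 0 \<Longrightarrow> length w = k \<and> set w \<subseteq> {1..7}"
proof (induction k a arbitrary: w rule: LieDeg.induct)
  case (br m a n b)
  have split: "\<exists>u v. w = u @ v \<and> ((a u \<noteq> 0 \<and> b v \<noteq> 0) \<or> (b u \<noteq> 0 \<and> a v \<noteq> 0))"
  proof -
    from br.prems have "ncmult a b w \<noteq> 0 \<or> ncmult b a w \<noteq> 0"
      by (auto simp: lbr_def)
    then obtain k where
      "(a (take k w) \<noteq> 0 \<and> b (drop k w) \<noteq> 0) \<or> (b (take k w) \<noteq> 0 \<and> a (drop k w) \<noteq> 0)"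
      unfolding ncmult_def by (metis (no_types, lifting) mult_eq_0_iff sum.neutral)
    then show ?thesis by (metis append_take_drop_id)
  qed
  then show ?case using br.IH by fastforce
next
  case (diff k a b)
  then show ?case by (metis diff_zero minus_apply)
qed (auto simp: gen_def split: if_splits)

lemma LieDeg_add: "LieDeg k a \<Longrightarrow> LieDeg k b \<Longrightarrow> LieDeg k (a + b)"
  using LieDeg.diff[of k a "0 - b"] LieDeg.diff[OF LieDeg.zero, of k b] by simp

lemma LieDeg_sum: "(\<And>i. i \<in> I \<Longrightarrow> LieDeg k (f i)) \<Longrightarrow> LieDeg k (\<Sum>i\<in>I. f i)"
  by (induction I rule: infinite_finite_induct) (auto intro: LieDeg_add LieDeg.zero)

lemma LieDeg_S: "q \<subseteq> {1..7} \<Longrightarrow> LieDeg 1 (S q)"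
  unfolding S_def by (rule LieDeg_sum, rule LieDeg.gen) auto

lemma LieDeg_1_apply [simp]: "LieDeg 1 h \<Longrightarrow> h [] = 0" "LieDeg 1 h \<Longrightarrow> h (a # b # w) = 0"
  using LieDeg_support[of 1 h] by force+

lemma LieDeg_1_eqI:
  assumes "LieDeg 1 f" "LieDeg 1 g" "\<And>m. m \<in> {1..7} \<Longrightarrow> f [m] = g [m]"
  shows "f = g"
proof
  fix w
  have "(f - g) w = 0"
  proof (rule ccontr)
    assume nz: "(f - g) w \<noteq> 0"
    with LieDeg_support[OF LieDeg.diff[OF assms(1,2)]] have "length w = 1" "set w \<subseteq> {1..7}"
      by blast+
    then obtain m where "w = [m]" "m \<in> {1..7}"
      by (cases w) auto
    with nz assms(3) show False by simp
  qed
  then show "f w = g w" by simp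
qed

lemma LieDeg_le_1:
  "LieDeg k a \<Longrightarrow> (k = 0 \<longrightarrow> a = 0) \<and> (k = 1 \<longrightarrow> a \<in> zspan (gen ` {1..7}))"
proof (induction rule: LieDeg.induct)
  case (zero k)
  show ?case by (blast intro: zspan.zero)
next
  case (gen i)
  then show ?case by (simp add: zspan.base)
next
  case (br m a n b)
  have "lbr a b = 0" if "m + n \<le> 1"
  proof -
    have "m = 0 \<or> n = 0" using that by arith
    then have "a = 0 \<or> b = 0" using br.IH by blast
    then show ?thesis by auto
  qed
  then show ?case
    using zspan.zero[of "gen ` {1..7}"] by (metis order.refl zero_le_one le_zero_eq)
next
  case (diff k a b)
  then show ?case by (metis diff_self zspan.diff)
qed

lemma LieDeg_1_iff: "LieDeg 1 h \<longleftrightarrow> h \<in> zspan (gen ` {1..7})"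
proof
  assume "h \<in> zspan (gen ` {1..7})"
  then show "LieDeg 1 h"
    by (induction rule: zspan.induct) (blast intro: LieDeg.intros)+
qed (use LieDeg_le_1 in blast)

lemma LieDeg_1_of_int_mult: "LieDeg 1 h \<Longrightarrow> LieDeg 1 (of_int c * h)"
  unfolding LieDeg_1_iff by (rule zspan_of_int_mult)

lemma Jacobi:
  assumes x: "LieDeg 1 x" and y: "LieDeg 1 y" and z: "LieDeg 1 z"
  shows "lbr (lbr x y) z = lbr x (lbr y z) - lbr y (lbr x z)"
proof (rule ext)
  fix w
  have deg2: "LieDeg 2 (lbr u v)" if "LieDeg 1 u" "LieDeg 1 v" for u v
    using LieDeg.br[OF that] by (simp add: numeral_2_eq_2)
  have deg3: "LieDeg 3 (lbr u v)" "LieDeg 3 (lbr v u)" if "LieDeg 1 u" "LieDeg 2 v" for u v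
    using LieDeg.br[OF that] LieDeg.br[OF that(2,1)] by (simp_all add: numeral_3_eq_3)
  have "LieDeg 3 (lbr (lbr x y) z)" "LieDeg 3 (lbr x (lbr y z) - lbr y (lbr x z))"
    by (blast intro: deg2 deg3 LieDeg.diff x y z)+
  note deg = LieDeg_support[OF this(1)] LieDeg_support[OF this(2)]
  show "lbr (lbr x y) z w = (lbr x (lbr y z) - lbr y (lbr x z)) w"
  proof (cases "length w = 3")
    case True
    then obtain a b c where "w = [a, b, c]"
      by (auto simp: numeral_3_eq_3 length_Suc_conv)
    then show ?thesis
      using x y z by (simp add: lbr_def ncmult_apply_short algebra_simps)
  next
    case False
    then have "lbr (lbr x y) z w = 0" "(lbr x (lbr y z) - lbr y (lbr x z)) w = 0"
      using deg[of w] by blast+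
    then show ?thesis by simp
  qed
qed

section \<open>The configuration and the relation modules\<close>

lemma Collect_insert_filter:
  "{x \<in> insert a A. P x} = (if P a then {a} else {}) \<union> {x \<in> A. P x}"
  by auto

lemma P0_eq: "P0 = {{1,3,5}, {1,4,7}, {1,6}, {2,3}, {2,4,6}, {2,5,7}, {3,6,7}, {4,5}}"
  unfolding P0_def C8_points_def by (simp only: Collect_insert_filter) (simp add: insert_commute)

lemma finite_P0: "finite P0"
  by (simp add: P0_eq)

lemma P0_member_subset: "p \<in> P0 \<Longrightarrow> p \<subseteq> {1..7}"
  by (auto simp: P0_eq)

lemma P0_member_finite: "p \<in> P0 \<Longrightarrow> finite p"
  by (auto simp: P0_eq)

lemma Aidx_iff: "(j, p) \<in> Aidx \<longleftrightarrow> p \<in> P0 \<and> j \<in> p"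
  unfolding Aidx_def using P0_member_subset by blast

lemma Bidx_eq: "Bidx = {(3, {1,3,5}), (5, {1,3,5}), (4, {1,4,7}), (7, {1,4,7}), (6, {1,6}),
  (3, {2,3}), (4, {2,4,6}), (6, {2,4,6}), (5, {2,5,7}), (7, {2,5,7}), (6, {3,6,7}), (7, {3,6,7}),
  (5, {4,5})}" (is "_ = ?B")
proof
  show "Bidx \<subseteq> ?B"
  proof
    fix x assume "x \<in> Bidx"
    then obtain k q where "x = (k, q)" "q \<in> P0" "k \<in> q" "k \<noteq> Min q"
      by (auto simp: Bidx_def Aidx_iff)
    then show "x \<in> ?B" unfolding P0_eq by (elim insertE emptyE) auto
  qed
qed (auto simp: Bidx_def Aidx_iff P0_eq)

lemma Bidx_D: "(k, q) \<in> Bidx \<Longrightarrow> q \<in> P0 \<and> k \<in> q \<and> k \<in> {1..7}"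
  by (simp add: Bidx_def Aidx_def)

lemma rbar_in_R2:
  assumes p: "p \<in> P0" and i: "i \<in> p"
  shows "rbar i p \<in> R2"
proof -
  have base: "rbar j p \<in> R2" if "j \<in> p" "j \<noteq> Min p" for j
    unfolding R2_def using that p by (intro zspan.base) (auto simp: Bidx_def Aidx_iff)
  show ?thesis
  proof (cases "i = Min p")
    case False
    then show ?thesis using base i by blast
  next
    case True
    have fin: "finite p" using P0_member_finite[OF p] .
    have "(\<Sum>j\<in>p. rbar j p) = lbr (S p) (S p)"
      unfolding rbar_def S_def lbr_sum_left ..
    then have "rbar i p = - (\<Sum>j\<in>p - {i}. rbar j p)"
      using sum.remove[OF fin i, of "\<lambda>j. rbar j p"] by (simp add: eq_neg_iff_add_eq_0)
    also have "\<dots> \<in> R2"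
      unfolding R2_def using base True by (intro zspan_uminus zspan_sum) (auto simp: R2_def)
    finally show ?thesis .
  qed
qed

lemma lbr_in_R3: "LieDeg 1 h \<Longrightarrow> r \<in> R2 \<Longrightarrow> lbr h r \<in> R3"
  unfolding R3_def by (rule zspan.base) blast

definition word_form :: "(nat list \<times> int) list \<Rightarrow> ncpoly \<Rightarrow> int" where
  "word_form L f = (\<Sum>(w, c)\<leftarrow>L. c * f w)"

lemma word_form_diff: "word_form L (f - g) = word_form L f - word_form L g"
  unfolding word_form_def by (induction L) (auto simp: algebra_simps)

lemma word_form_R3:
  assumes L: "\<And>h. LieDeg 1 h \<Longrightarrow> \<forall>(k, q)\<in>Bidx. word_form L (lbr h (rbar k q)) = 0"
    and f: "f \<in> R3"
  shows "word_form L f = 0"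
proof -
  have gens: "word_form L (lbr h r) = 0" if h: "LieDeg 1 h" and r: "r \<in> R2" for h r
  proof (rule zspan_map_vanish[of "\<lambda>r. word_form L (lbr h r)"])
    show "word_form L (lbr h (x - y)) = word_form L (lbr h x) - word_form L (lbr h y)" for x y
      by (simp only: lbr_diff_right word_form_diff)
    show "word_form L (lbr h g) = 0" if "g \<in> {rbar i p |i p. (i, p) \<in> Bidx}" for g
      using that L[OF h] by blast
    show "r \<in> zspan {rbar i p |i p. (i, p) \<in> Bidx}" using r by (simp only: R2_def)
  qed
  show ?thesis
  proof (rule zspan_map_vanish[of "word_form L" "{lbr h r |h r. LieDeg 1 h \<and> r \<in> R2}"])
    show "word_form L (x - y) = word_form L x - word_form L y" for x y
      by (rule word_form_diff)
    show "word_form L g = 0" if "g \<in> {lbr h r |h r. LieDeg 1 h \<and> r \<in> R2}" for g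
      using that gens by blast
    show "f \<in> zspan {lbr h r |h r. LieDeg 1 h \<and> r \<in> R2}" using f by (simp only: R3_def)
  qed
qed

definition slot :: "nat \<Rightarrow> nat set \<Rightarrow> ncpoly \<Rightarrow> nat \<times> nat set \<Rightarrow> ncpoly" where
  "slot j p h = (\<lambda>ip. if ip = (j, p) then h else 0)"

definition block_const :: "nat set \<Rightarrow> ncpoly \<Rightarrow> nat \<times> nat set \<Rightarrow> ncpoly" where
  "block_const p h = (\<Sum>j\<in>p. slot j p h)"

definition block :: "nat set \<Rightarrow> (nat \<times> nat set \<Rightarrow> ncpoly) \<Rightarrow> nat \<times> nat set \<Rightarrow> ncpoly" where
  "block p a = (\<Sum>j\<in>p. slot j p (a (j, p)))"

lemma slot_diff: "slot j p (x - y) = slot j p x - slot j p y"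
  by (auto simp: slot_def)

lemma block_const_diff: "block_const p (x - y) = block_const p x - block_const p y"
  by (simp add: block_const_def slot_diff sum_subtractf)

lemma sum_slot_apply:
  "finite p \<Longrightarrow> (\<Sum>j\<in>p. slot j p (f j)) (k, q) = (if q = p \<and> k \<in> p then f k else 0)"
  by (cases "q = p") (simp_all add: slot_def sum_fun_apply sum.delta)

lemma block_const_apply:
  "finite p \<Longrightarrow> block_const p h (j, q) = (if q = p \<and> j \<in> p then h else 0)"
  unfolding block_const_def by (rule sum_slot_apply)

lemma block_apply:
  "finite p \<Longrightarrow> block p a (j, q) = (if q = p \<and> j \<in> p then a (j, p) else 0)"
  unfolding block_def by (rule sum_slot_apply)

lemma a0_eq_slot: "(i, p) \<in> Aidx \<Longrightarrow> a0 i p = slot i p (gen i)"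
  by (auto simp: a0_def slot_def)

lemma a2_eq_slot: "(i, p) \<in> Aidx \<Longrightarrow> a2 i p q = slot i p (S q)"
  by (auto simp: a2_def slot_def)

lemma a1_eq_block_const: "p \<in> P0 \<Longrightarrow> a1 m p = block_const p (gen m)"
  by (auto simp: a1_def block_const_apply P0_member_finite Aidx_iff)

lemma Agrp_eq_sum_block:
  assumes "a \<in> Agrp"
  shows "a = (\<Sum>p\<in>P0. block p a)"
proof
  fix ip :: "nat \<times> nat set"
  obtain j q where ip: "ip = (j, q)" by force
  have "(\<Sum>p\<in>P0. block p a) ip = (\<Sum>p\<in>P0. if q = p \<and> j \<in> p then a (j, p) else 0)"
    by (simp add: ip sum_fun_apply block_apply P0_member_finite cong: sum.cong)
  also have "\<dots> = (\<Sum>p\<in>P0. if p = q then (if j \<in> q then a (j, q) else 0) else 0)"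
    by (rule sum.cong) auto
  also have "\<dots> = (if (j, q) \<in> Aidx then a (j, q) else 0)"
    by (simp add: Aidx_iff finite_P0)
  also have "\<dots> = a ip"
    using assms by (auto simp: ip Agrp_def)
  finally show "a ip = (\<Sum>p\<in>P0. block p a) ip" ..
qed

lemma Agrp_LieDeg:
  assumes "a \<in> Agrp"
  shows "LieDeg 1 (a ip)"
proof (cases "ip \<in> Aidx")
  case False
  then have "a ip = 0" using assms unfolding Agrp_def by blast
  then show ?thesis by (simp add: LieDeg.zero)
qed (use assms in \<open>simp add: Agrp_def\<close>)

section \<open>The generators of \<open>U\<close> lie in the kernel\<close>

lemma R3_zero: "0 \<in> R3"
  unfolding R3_def by (rule zspan.zero)

lemma R3_add: "x \<in> R3 \<Longrightarrow> y \<in> R3 \<Longrightarrow> x + y \<in> R3"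
  unfolding R3_def by (rule zspan_add)

lemma R3_uminus: "x \<in> R3 \<Longrightarrow> - x \<in> R3"
  unfolding R3_def by (rule zspan_uminus)

lemma R3_diff: "x \<in> R3 \<Longrightarrow> y \<in> R3 \<Longrightarrow> x - y \<in> R3"
  unfolding R3_def by (rule zspan.diff)

lemma tau_val_diff: "tau_val (a - b) k p = tau_val a k p - tau_val b k p"
  by (simp add: tau_val_def lbr_diff_left lbr_diff_right sum_subtractf)

lemma tau_val_eq_0: "(\<And>j. a (j, p) = 0) \<Longrightarrow> tau_val a k p = 0"
  by (simp add: tau_val_def)

lemma ker_tauI:
  "a \<in> Agrp \<Longrightarrow> (\<And>k q. (k, q) \<in> Bidx \<Longrightarrow> tau_val a k q \<in> R3) \<Longrightarrow> a \<in> ker_tau"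
  by (auto simp: ker_tau_def)

lemma ker_tau_Agrp: "a \<in> ker_tau \<Longrightarrow> a \<in> Agrp"
  by (simp add: ker_tau_def)

lemma zero_in_ker_tau: "0 \<in> ker_tau"
  by (rule ker_tauI) (simp_all add: Agrp_def tau_val_eq_0 R3_zero LieDeg.zero)

lemma diff_in_ker_tau: "a \<in> ker_tau \<Longrightarrow> b \<in> ker_tau \<Longrightarrow> a - b \<in> ker_tau"
  by (auto simp: ker_tau_def Agrp_def tau_val_diff R3_def intro!: zspan.diff LieDeg.diff)

lemma slot_in_ker_tau:
  assumes ip: "(i, p) \<in> Aidx" and h: "LieDeg 1 h" and r: "lbr (gen i) h \<in> R2"
  shows "slot i p h \<in> ker_tau"
proof (rule ker_tauI)
  show "slot i p h \<in> Agrp"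
    using ip h by (auto simp: Agrp_def slot_def LieDeg.zero)
  have p: "p \<in> P0" "i \<in> p" using ip by (simp_all add: Aidx_iff)
  fix k q assume kq: "(k, q) \<in> Bidx"
  show "tau_val (slot i p h) k q \<in> R3"
  proof (cases "q = p")
    case True
    have "(\<Sum>j\<in>p. lbr (gen j) (slot i p h (j, p))) = lbr (gen i) h"
      using p by (simp add: slot_def if_distrib P0_member_finite cong: if_cong)
    then have "tau_val (slot i p h) k p
        = (if k = i then - lbr (S p) (lbr (gen i) h) else 0) + lbr (gen k) (lbr (gen i) h)"
      by (auto simp: tau_val_def slot_def lbr_antisym[of _ "S p"])
    moreover have "lbr (S p) (lbr (gen i) h) \<in> R3"
      using p r by (intro lbr_in_R3 LieDeg_S P0_member_subset)
    moreover have "lbr (gen k) (lbr (gen i) h) \<in> R3"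
      using r Bidx_D[OF kq] by (intro lbr_in_R3 LieDeg.gen) simp_all
    ultimately show ?thesis
      using True by (auto intro: R3_add R3_diff R3_uminus R3_zero)
  qed (simp add: tau_val_eq_0 slot_def R3_zero)
qed

lemma block_const_in_ker_tau:
  assumes p: "p \<in> P0" and h: "LieDeg 1 h"
  shows "block_const p h \<in> ker_tau"
proof (rule ker_tauI)
  show "block_const p h \<in> Agrp"
    using p h by (auto simp: Agrp_def block_const_apply P0_member_finite Aidx_iff LieDeg.zero)
  fix k q assume kq: "(k, q) \<in> Bidx"
  then have k: "k \<in> q" "LieDeg 1 (gen k)"
    using Bidx_D[OF kq] LieDeg.gen by simp_all
  show "tau_val (block_const p h) k q \<in> R3"
  proof (cases "q = p")
    case True
    have Sp: "LieDeg 1 (S p)" using p by (intro LieDeg_S P0_member_subset)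
    have "(\<Sum>j\<in>p. lbr (gen j) h) = lbr (S p) h"
      by (simp add: S_def lbr_sum_left)
    then have "tau_val (block_const p h) k p = lbr (lbr (gen k) h) (S p) + lbr (gen k) (lbr (S p) h)"
      using True k by (simp add: tau_val_def block_const_apply P0_member_finite p)
    also have "\<dots> = - lbr h (rbar k p)"
      using Jacobi[OF k(2) h Sp] lbr_uminus_right[of "gen k" "lbr h (S p)"]
      by (simp add: rbar_def lbr_antisym[of "S p" h])
    finally show ?thesis
      using True k p by (auto intro: R3_uminus lbr_in_R3 h rbar_in_R2)
  qed (simp add: tau_val_eq_0 block_const_apply P0_member_finite p R3_zero)
qed

lemma U_subset_ker_tau: "U \<subseteq> ker_tau"
proof
  fix a assume "a \<in> U"
  then show "a \<in> ker_tau"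
    unfolding U_def
  proof (induction rule: zspan.induct)
    case zero
    show ?case by (rule zero_in_ker_tau)
  next
    case (base s)
    then consider (a0) i p where "s = a0 i p" "(i, p) \<in> Aidx"
      | (a1) i p where "s = a1 i p" "i \<in> {1..7}" "p \<in> P0"
      | (a2) i p q where "s = a2 i p q" "p \<in> P0" "q \<in> P0" "i \<in> p" "i \<in> q"
      by blast
    then show ?case
    proof cases
      case a0
      have "LieDeg 1 (gen i)" using a0 by (intro LieDeg.gen) (simp add: Aidx_def)
      moreover have "lbr (gen i) (gen i) \<in> R2" by (simp add: R2_def zspan.zero)
      ultimately show ?thesis using a0 slot_in_ker_tau by (simp add: a0_eq_slot)
    next
      case a1
      then show ?thesis using block_const_in_ker_tau LieDeg.gen by (simp add: a1_eq_block_const)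
    next
      case a2
      have "LieDeg 1 (S q)" using a2 by (intro LieDeg_S P0_member_subset)
      moreover have "lbr (gen i) (S q) \<in> R2" using a2 rbar_in_R2 by (simp add: rbar_def)
      ultimately show ?thesis using a2 slot_in_ker_tau by (simp add: a2_eq_slot Aidx_iff)
    qed
  next
    case (diff a b)
    show ?case by (rule diff_in_ker_tau[OF diff.IH])
  qed
qed

section \<open>Kernel elements lie in \<open>U\<close>\<close>

definition U_slot :: "nat \<Rightarrow> ncpoly set" where
  "U_slot j = zspan (insert (gen j) {S q |q. q \<in> P0 \<and> j \<in> q})"

lemma a0_in_U: "(i, p) \<in> Aidx \<Longrightarrow> a0 i p \<in> U"
  unfolding U_def by (rule zspan.base) blast

lemma a1_in_U: "i \<in> {1..7} \<Longrightarrow> p \<in> P0 \<Longrightarrow> a1 i p \<in> U"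
  unfolding U_def by (rule zspan.base) blast

lemma a2_in_U: "(i, p) \<in> Aidx \<Longrightarrow> q \<in> P0 \<Longrightarrow> i \<in> q \<Longrightarrow> a2 i p q \<in> U"
  unfolding U_def Aidx_def by (rule zspan.base) blast

lemma slot_in_U:
  assumes jp: "(j, p) \<in> Aidx" and h: "h \<in> U_slot j"
  shows "slot j p h \<in> U"
proof -
  have gens: "slot j p g \<in> U" if "g \<in> insert (gen j) {S q |q. q \<in> P0 \<and> j \<in> q}" for g
    using that jp a0_in_U a2_in_U by (auto simp: a0_eq_slot a2_eq_slot)
  show ?thesis
    using zspan_map[of "slot j p", OF slot_diff gens[unfolded U_def]] h
    unfolding U_def U_slot_def by blast
qed

lemma block_const_in_U:
  assumes p: "p \<in> P0" and h: "LieDeg 1 h"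
  shows "block_const p h \<in> U"
proof -
  have gens: "block_const p g \<in> U" if "g \<in> gen ` {1..7}" for g
    using that p a1_in_U by (auto simp: a1_eq_block_const)
  show ?thesis
    using zspan_map[of "block_const p", OF block_const_diff gens[unfolded U_def]] h
    unfolding U_def LieDeg_1_iff by blast
qed

definition P0_list :: "nat set list" where
  "P0_list = [{1,3,5}, {1,4,7}, {1,6}, {2,3}, {2,4,6}, {2,5,7}, {3,6,7}, {4,5}]"

lemma set_P0_list: "set P0_list = P0"
  by (simp add: P0_list_def P0_eq)

(* Every two lines of C_8 meet exactly once, so the points q in P0 on l_j, together with the
   point on l_0, partition the indices m /= j. Hence the residue keeps at most one coordinate of
   each q - {j} and of the point on l_0: three coordinates in all. *)
definition slot_residue :: "nat \<Rightarrow> ncpoly \<Rightarrow> ncpoly" where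
  "slot_residue j h = h - of_int (h [j]) * gen j
     - (\<Sum>q\<leftarrow>filter (\<lambda>q. j \<in> q) P0_list. of_int (h [Min (q - {j})]) * (S q - gen j))"

lemma diff_slot_residue_in_U_slot: "h - slot_residue j h \<in> U_slot j"
proof -
  have gen: "gen j \<in> U_slot j" and S: "S q \<in> U_slot j" if "q \<in> P0" "j \<in> q" for q
    using that by (auto simp: U_slot_def intro: zspan.base)
  have "h - slot_residue j h = of_int (h [j]) * gen j
     + (\<Sum>q\<leftarrow>filter (\<lambda>q. j \<in> q) P0_list. of_int (h [Min (q - {j})]) * (S q - gen j))"
    by (simp add: slot_residue_def)
  also have "\<dots> \<in> U_slot j"
    unfolding U_slot_def using gen S
    by (intro zspan_add zspan_of_int_mult zspan_sum_list zspan.diff zspan.base)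
      (auto simp: set_P0_list)
  finally show ?thesis .
qed

lemma LieDeg_slot_residue:
  assumes h: "LieDeg 1 h" and j: "j \<in> {1..7}"
  shows "LieDeg 1 (slot_residue j h)"
proof -
  have "LieDeg 1 (S q)" if "q \<in> set P0_list" for q
    using that by (intro LieDeg_S P0_member_subset) (simp add: set_P0_list)
  then show ?thesis
    using h LieDeg.gen[OF j] unfolding slot_residue_def LieDeg_1_iff
    by (intro zspan.diff zspan_of_int_mult zspan_sum_list) auto
qed

lemma block_in_U:
  assumes p: "p \<in> P0" and a: "a \<in> Agrp" and d: "LieDeg 1 d"
    and coords: "\<forall>j\<in>p. \<forall>m\<in>{1..7}. slot_residue j (a (j, p) - d) [m] = 0"
  shows "block p a \<in> U"
proof -
  have residues: "slot_residue j (a (j, p) - d) = 0" if j: "j \<in> p" for j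
  proof (rule LieDeg_1_eqI)
    have "j \<in> {1..7}" using j p P0_member_subset by blast
    then show "LieDeg 1 (slot_residue j (a (j, p) - d))"
      by (intro LieDeg_slot_residue LieDeg.diff Agrp_LieDeg[OF a] d)
  qed (use coords j in \<open>simp_all add: LieDeg.zero\<close>)
  have "block p a = block_const p d + (\<Sum>j\<in>p. slot j p (a (j, p) - d))"
    by (simp add: block_def block_const_def slot_diff sum_subtractf)
  also have "\<dots> \<in> U"
  proof -
    have "slot j p (a (j, p) - d) \<in> U" if j: "j \<in> p" for j
    proof (rule slot_in_U)
      show "(j, p) \<in> Aidx" using p j by (simp add: Aidx_iff)
      show "a (j, p) - d \<in> U_slot j"
        using diff_slot_residue_in_U_slot[of "a (j, p) - d" j] residues[OF j] by simp
    qed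
    with block_const_in_U[OF p d] show ?thesis
      unfolding U_def by (intro zspan_add zspan_sum)
  qed
  finally show ?thesis .
qed

lemma atLeastAtMost_1_7: "{1..7::nat} = {1, 2, 3, 4, 5, 6, 7}"
  by auto

lemmas eval_at_words = lbr_def rbar_def tau_val_def ncmult_apply_short word_form_def

lemmas residue_eval = slot_residue_def P0_list_def of_int_fun_apply insert_Diff_if

lemma word_form_tau_val:
  assumes a: "a \<in> ker_tau" and kp: "(k, p) \<in> Bidx"
    and L: "\<And>h. LieDeg 1 h \<Longrightarrow> \<forall>(k, q)\<in>Bidx. word_form L (lbr h (rbar k q)) = 0"
  shows "word_form L (tau_val a k p) = 0"
  using a kp by (intro word_form_R3[OF L]) (auto simp: ker_tau_def)

(* In the blocks below, each word form is an integer functional on words of length 3 vanishing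
   on R_3 (checked on the spanning set [h, rbar k q]). Applied to tau_val it gives a linear
   equation on the coordinates c j m of the block, and these equations make all residues of
   a(j,p) - d vanish for the given shift d = a(i,p) + alpha x_i + beta S_q + gamma S_q'. *)
lemma block_in_U_by_shift:
  fixes \<alpha> \<beta> \<gamma> :: int
  assumes a: "a \<in> ker_tau"
    and coords: "\<forall>j\<in>p. \<forall>m\<in>{1,2,3,4,5,6,7}. slot_residue j (a (j, p)
      - (a (i, p) + of_int \<alpha> * gen i + of_int \<beta> * S q + of_int \<gamma> * S q')) [m] = 0"
    and p: "p \<in> P0" and i: "i \<in> p" and q: "q \<in> P0" "q' \<in> P0"
  shows "block p a \<in> U"
proof (rule block_in_U[OF p ker_tau_Agrp[OF a]])
  have "i \<in> {1..7}" using p i P0_member_subset by blast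
  then show "LieDeg 1 (a (i, p) + of_int \<alpha> * gen i + of_int \<beta> * S q + of_int \<gamma> * S q')"
    using q by (intro LieDeg_add LieDeg_1_of_int_mult LieDeg_S Agrp_LieDeg[OF ker_tau_Agrp[OF a]]
        LieDeg.gen P0_member_subset)
qed (use coords[folded atLeastAtMost_1_7] in blast)

lemma block_135_in_U:
  assumes a: "a \<in> ker_tau"
  shows "block {1,3,5} a \<in> U"
proof -
  define c where "c j m = a (j, {1,3,5}) [m]" for j m
  have e: "word_form [([1,2,5], -1), ([1,5,7], -1), ([3,1,7], -1), ([3,4,1], -1), ([5,6,3], -1),
      ([5,7,3], 1), ([7,2,1], 1), ([7,4,3], 1), ([7,5,3], 1), ([7,6,5], 1)]
      (tau_val a 5 {1,3,5}) = 0"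
    "word_form [([1,3,3], -2), ([1,5,1], -1), ([1,5,3], 2), ([3,1,1], -2), ([5,3,3], 2)]
      (tau_val a 3 {1,3,5}) = 0"
    "word_form [([1,2,5], -1), ([1,2,7], 1), ([3,1,4], 1), ([3,1,7], -1), ([3,6,5], -1), ([4,3,1], 1),
      ([5,3,7], -1), ([7,4,3], 1), ([7,5,1], -1), ([7,6,5], 1)]
      (tau_val a 3 {1,3,5}) = 0"
    by (rule word_form_tau_val[OF a]; simp add: Bidx_eq eval_at_words)+
  show ?thesis
    by (rule block_in_U_by_shift[OF a, where i = 1 and q = "{1,4,7}" and q' = "{1,6}"
      and \<alpha> = "- c 1 1 + c 1 4 + c 1 5 + c 1 6 + c 3 1 - c 3 4 - c 3 5 - c 5 6"
      and \<beta> = "- c 1 4 + c 3 4"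
      and \<gamma> = "- c 1 6 + c 5 6"],
        use e in \<open>simp add: eval_at_words residue_eval c_def Agrp_LieDeg[OF ker_tau_Agrp[OF a]]\<close>)
      (simp_all add: P0_eq)
qed

lemma block_147_in_U:
  assumes a: "a \<in> ker_tau"
  shows "block {1,4,7} a \<in> U"
proof -
  define c where "c j m = a (j, {1,4,7}) [m]" for j m
  have e: "word_form [([2,1,7], 1), ([2,4,7], -1), ([2,6,5], 1), ([4,1,2], -1), ([4,3,7], 1), ([6,2,5], 1),
      ([6,3,4], -1), ([7,2,6], -1), ([7,5,6], 1), ([7,6,4], -1)]
      (tau_val a 7 {1,4,7}) = 0"
    "word_form [([1,5,7], 1), ([2,4,7], 1), ([2,7,1], 1), ([3,1,7], 1), ([3,4,1], 1), ([3,7,4], 1),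
      ([4,1,2], 1), ([4,6,7], 1), ([5,2,1], 1), ([5,3,7], 1), ([5,6,3], 1), ([5,7,6], 1),
      ([6,2,7], 1), ([6,3,4], 1), ([6,5,2], 1)]
      (tau_val a 7 {1,4,7}) = 0"
    "word_form [([4,1,7], -2), ([4,4,1], -2), ([4,7,4], -1), ([7,1,7], 1), ([7,4,7], -1)]
      (tau_val a 4 {1,4,7}) = 0"
    by (rule word_form_tau_val[OF a]; simp add: Bidx_eq eval_at_words)+
  show ?thesis
    by (rule block_in_U_by_shift[OF a, where i = 7 and q = "{2,5,7}" and q' = "{3,6,7}"
      and \<alpha> = "- c 1 2 - c 1 4 + c 1 7 - c 4 3 + c 7 2 + c 7 3 + c 7 4 - c 7 7"
      and \<beta> = "c 1 2 - c 7 2"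
      and \<gamma> = "c 4 3 - c 7 3"],
        use e in \<open>simp add: eval_at_words residue_eval c_def Agrp_LieDeg[OF ker_tau_Agrp[OF a]]\<close>)
      (simp_all add: P0_eq)
qed

lemma block_16_in_U:
  assumes a: "a \<in> ker_tau"
  shows "block {1,6} a \<in> U"
proof -
  define c where "c j m = a (j, {1,6}) [m]" for j m
  have e: "word_form [([1,2,4], 1), ([1,2,6], -1), ([1,5,6], -1), ([1,7,6], -1), ([3,4,1], -1), ([3,7,1], 1),
      ([4,3,7], 1), ([4,7,6], 1), ([6,3,1], 1), ([6,3,4], -1), ([6,4,1], 1), ([6,5,3], 1),
      ([7,4,3], 1)]
      (tau_val a 6 {1,6}) = 0"
    by (rule word_form_tau_val[OF a]; simp add: Bidx_eq eval_at_words)+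
  show ?thesis
    by (rule block_in_U_by_shift[OF a, where i = 1 and q = "{1,3,5}" and q' = "{1,4,7}"
      and \<alpha> = "0"
      and \<beta> = "- c 1 5 + c 6 5"
      and \<gamma> = "c 1 2 - c 1 4 - c 6 2 + c 6 4"],
        use e in \<open>simp add: eval_at_words residue_eval c_def Agrp_LieDeg[OF ker_tau_Agrp[OF a]]\<close>)
      (simp_all add: P0_eq)
qed

lemma block_23_in_U:
  assumes a: "a \<in> ker_tau"
  shows "block {2,3} a \<in> U"
proof -
  define c where "c j m = a (j, {2,3}) [m]" for j m
  have e: "word_form [([2,1,3], -1), ([2,1,5], 1), ([2,5,6], -1), ([2,7,3], -1), ([2,7,6], 1), ([3,4,2], -1),
      ([3,4,6], 1), ([3,5,2], 1), ([3,6,2], 1), ([3,7,5], 1), ([5,3,6], 1), ([6,5,3], 1),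
      ([7,5,6], 1), ([7,6,5], 1)]
      (tau_val a 3 {2,3}) = 0"
    by (rule word_form_tau_val[OF a]; simp add: Bidx_eq eval_at_words)+
  show ?thesis
    by (rule block_in_U_by_shift[OF a, where i = 2 and q = "{2,4,6}" and q' = "{2,5,7}"
      and \<alpha> = "0"
      and \<beta> = "- c 2 4 + c 3 4"
      and \<gamma> = "c 2 1 - c 2 5 - c 3 1 + c 3 5"],
        use e in \<open>simp add: eval_at_words residue_eval c_def Agrp_LieDeg[OF ker_tau_Agrp[OF a]]\<close>)
      (simp_all add: P0_eq)
qed

lemma block_246_in_U:
  assumes a: "a \<in> ker_tau"
  shows "block {2,4,6} a \<in> U"
proof -
  define c where "c j m = a (j, {2,4,6}) [m]" for j m
  have e: "word_form [([2,1,4], -1), ([2,5,6], -1), ([4,7,3], -1), ([4,7,6], 1), ([6,3,4], -1), ([6,5,7], 1),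
      ([7,1,2], 1), ([7,2,6], -1), ([7,4,2], -1), ([7,4,3], -1), ([7,4,6], 1)]
      (tau_val a 4 {2,4,6}) = 0"
    "word_form [([2,4,4], -2), ([4,6,4], -1), ([6,2,4], -2), ([6,2,6], 1), ([6,6,4], 2)]
      (tau_val a 4 {2,4,6}) = 0"
    "word_form [([2,4,7], -1), ([2,5,6], -1), ([4,1,2], -1), ([4,3,6], -1), ([4,3,7], 1), ([4,7,6], 1),
      ([7,1,2], 1), ([7,2,6], -1), ([7,4,6], 1), ([7,5,6], 1)]
      (tau_val a 6 {2,4,6}) = 0"
    by (rule word_form_tau_val[OF a]; simp add: Bidx_eq eval_at_words)+
  show ?thesis
    by (rule block_in_U_by_shift[OF a, where i = 2 and q = "{2,3}" and q' = "{2,5,7}"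
      and \<alpha> = "- c 2 2 + c 2 3 + c 2 5 + c 2 6 + c 4 2 - c 4 3 - c 4 6 - c 6 5"
      and \<beta> = "- c 2 3 + c 4 3"
      and \<gamma> = "- c 2 5 + c 6 5"],
        use e in \<open>simp add: eval_at_words residue_eval c_def Agrp_LieDeg[OF ker_tau_Agrp[OF a]]\<close>)
      (simp_all add: P0_eq)
qed

lemma block_257_in_U:
  assumes a: "a \<in> ker_tau"
  shows "block {2,5,7} a \<in> U"
proof -
  define c where "c j m = a (j, {2,5,7}) [m]" for j m
  have e: "word_form [([1,2,5], 1), ([1,4,3], 1), ([3,1,7], 1), ([3,5,6], -1), ([5,6,7], -1), ([6,3,5], -1),
      ([7,2,1], -1), ([7,3,5], 1), ([7,4,3], -1), ([7,5,1], 1)]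
      (tau_val a 5 {2,5,7}) = 0"
    "word_form [([1,2,4], 1), ([1,3,4], 1), ([1,4,2], 1), ([1,5,7], -1), ([1,7,3], 1), ([2,4,7], -1),
      ([2,5,6], -1), ([2,7,1], -1), ([3,1,4], 1), ([4,6,7], -1), ([4,7,3], -1),
      ([5,2,1], -1), ([5,3,7], -1), ([5,6,3], -1), ([5,7,6], -1), ([6,3,4], -1),
      ([7,2,6], -1), ([7,3,1], 1)]
      (tau_val a 7 {2,5,7}) = 0"
    "word_form [([2,7,7], -1), ([5,2,7], -1), ([5,5,2], -1), ([5,7,7], 1), ([7,5,5], 1)]
      (tau_val a 5 {2,5,7}) = 0"
    by (rule word_form_tau_val[OF a]; simp add: Bidx_eq eval_at_words)+
  show ?thesis
    by (rule block_in_U_by_shift[OF a, where i = 7 and q = "{1,4,7}" and q' = "{3,6,7}"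
      and \<alpha> = "- c 2 1 - c 2 5 + c 2 7 - c 5 6 + c 7 1 + c 7 5 + c 7 6 - c 7 7"
      and \<beta> = "c 2 1 - c 7 1"
      and \<gamma> = "c 5 6 - c 7 6"],
        use e in \<open>simp add: eval_at_words residue_eval c_def Agrp_LieDeg[OF ker_tau_Agrp[OF a]]\<close>)
      (simp_all add: P0_eq)
qed

lemma block_367_in_U:
  assumes a: "a \<in> ker_tau"
  shows "block {3,6,7} a \<in> U"
proof -
  define c where "c j m = a (j, {3,6,7}) [m]" for j m
  have e: "word_form [([1,4,3], -1), ([1,5,7], -1), ([1,7,3], 1), ([2,5,6], -1), ([2,7,1], -1),
      ([3,6,5], -1), ([3,7,4], -1), ([4,1,2], -1), ([4,6,7], -1), ([5,2,1], -1),
      ([6,2,7], -1), ([6,3,4], -1), ([6,7,5], -1), ([7,3,1], 1), ([7,3,5], -1),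
      ([7,4,2], -1)]
      (tau_val a 7 {3,6,7}) = 0"
    "word_form [([2,1,4], -1), ([2,1,7], 1), ([4,3,6], -1), ([4,6,7], -1), ([6,2,7], -1),
      ([6,5,2], -1), ([6,5,7], 1), ([7,3,4], 1), ([7,4,2], -1)]
      (tau_val a 7 {3,6,7}) = 0"
    "word_form [([3,7,7], -2), ([6,3,6], 1), ([6,3,7], -2), ([6,7,6], -1), ([6,7,7], 2)]
      (tau_val a 6 {3,6,7}) = 0"
    by (rule word_form_tau_val[OF a]; simp add: Bidx_eq eval_at_words)+
  show ?thesis
    by (rule block_in_U_by_shift[OF a, where i = 7 and q = "{1,4,7}" and q' = "{2,5,7}"
      and \<alpha> = "- c 3 4 - c 3 6 + c 3 7 - c 6 5 + c 7 4 + c 7 5 + c 7 6 - c 7 7"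
      and \<beta> = "c 3 4 - c 7 4"
      and \<gamma> = "c 6 5 - c 7 5"],
        use e in \<open>simp add: eval_at_words residue_eval c_def Agrp_LieDeg[OF ker_tau_Agrp[OF a]]\<close>)
      (simp_all add: P0_eq)
qed

lemma block_45_in_U:
  assumes a: "a \<in> ker_tau"
  shows "block {4,5} a \<in> U"
proof -
  define c where "c j m = a (j, {4,5}) [m]" for j m
  have e: "word_form [([1,3,4], -1), ([2,7,1], 1), ([2,7,4], -1), ([3,5,4], -1), ([4,1,2], 1), ([4,1,5], -1),
      ([4,2,5], -1), ([5,2,1], 1), ([5,4,3], -1), ([5,6,2], -1), ([5,6,4], 1), ([5,7,1], -1),
      ([5,7,4], 1)]
      (tau_val a 5 {4,5}) = 0"
    by (rule word_form_tau_val[OF a]; simp add: Bidx_eq eval_at_words)+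
  show ?thesis
    by (rule block_in_U_by_shift[OF a, where i = 4 and q = "{1,4,7}" and q' = "{2,4,6}"
      and \<alpha> = "0"
      and \<beta> = "- c 4 1 + c 4 3 + c 5 1 - c 5 3"
      and \<gamma> = "- c 4 6 + c 5 6"],
        use e in \<open>simp add: eval_at_words residue_eval c_def Agrp_LieDeg[OF ker_tau_Agrp[OF a]]\<close>)
      (simp_all add: P0_eq)
qed

lemma ker_tau_subset_U: "ker_tau \<subseteq> U"
proof
  fix a assume a: "a \<in> ker_tau"
  have "block p a \<in> U" if "p \<in> P0" for p
    using that block_135_in_U[OF a] block_147_in_U[OF a] block_16_in_U[OF a] block_23_in_U[OF a]
      block_246_in_U[OF a] block_257_in_U[OF a] block_367_in_U[OF a] block_45_in_U[OF a]
    by (auto simp: P0_eq)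
  then have "(\<Sum>p\<in>P0. block p a) \<in> U"
    unfolding U_def by (rule zspan_sum)
  then show "a \<in> U"
    using Agrp_eq_sum_block[OF ker_tau_Agrp[OF a]] by simp
qed

theorem lemma3p3:
  shows "U = ker_tau"
  using U_subset_ker_tau ker_tau_subset_U by (rule equalityI)

end
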